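(* Let $j^\star=\left\lfloor-\frac{\log(1-\lambda)}{\log(\lambda d+1)}\right\rfloor$ and assume $I>j^\star$. There exists a unique fixed point $x^\star$. It satisfies $x^\star_{\cdot,j^\star}+x^\star_{\cdot,j^\star+1}=1$ (so $x^\star_{i,j}=0$ whenever $j\notin\{j^\star,j^\star+1\}$), and $$\lambda d\,x^\star_{0,j^\star}=(1+\lambda d)(1-\lambda)-\frac{1}{(1+\lambda d)^{j^\star}},\qquad x^\star_{0,j^\star}+x^\star_{0,j^\star+1}=1-\lambda.$$
   Context: Fix $\lambda\in(0,1)$, an integer $d\ge2$ and an integer $I>1$. $\mathcal S=\{x=(x_{i,j})_{0\le i\le j\le I}: x_{i,j}\ge0,\ \sum_{i=0}^I\sum_{j=i}^I x_{i,j}=1\}$; $x_{i,\cdot}=\sum_{j=i}^I x_{i,j}$, $x_{\cdot,j}=\sum_{i=0}^j x_{i,j}$. For $0\le j\le I$: $\mathcal R_j(x)=\max\{0,\lambda(1-d\sum_{i=0}^j(j+1-i)x_{i,\cdot})\}\,\mathbf 1\{\sum_{i=0}^j x_{\cdot,i}=0\}$, $\mathcal G_j(x)=\lambda d\,\mathbf 1\{\sum_{i=0}^j x_{\cdot,i}=0,\ d\sum_{i=0}^j(j+1-i)x_{i,\cdot}\le1\}\sum_{i=0}^j x_{i,\cdot}$. Write $\rho_k^{a,b}(x)=\mathcal R_k(x)\frac{x_{a,b}}{x_{\cdot,b}}\mathbf 1\{x_{\cdot,b}>0\}$ (equal to $0$ when $x_{\cdot,b}=0$). The drift $b(x)$ is: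 $b_{0,0}=\lambda d(x_{0,\cdot}-x_{0,0})-\lambda+\mathcal R_0(x)$; for $i<j$: $b_{i,j}=x_{i+1,j}-\mathbf 1\{i>0\}x_{i,j}-\lambda d x_{i,j}-\rho_{j-1}^{i,j}+\mathbf 1\{i>0\}\rho_{j-2}^{i-1,j-1}+\mathbf 1\{j=I,i>0\}\rho_{I-1}^{i-1,I}$; $b_{1,1}=-x_{1,1}+\lambda d(x_{1,\cdot}-x_{1,1})+\lambda-\mathcal R_0(x)-\rho_0^{1,1}-\mathcal G_1(x)$; for $2\le i\le I-1$: $b_{i,i}=-x_{i,i}+\lambda d(x_{i,\cdot}-x_{i,i})-\rho_{i-1}^{i,i}+\rho_{i-2}^{i-1,i-1}+\mathcal G_{i-1}(x)-\mathcal G_i(x)$; $b_{I,I}=-x_{I,I}+\rho_{I-2}^{I-1,I-1}+\mathcal G_{I-1}(x)+\rho_{I-1}^{I-1,I}$. A fluid solution is an absolutely continuous $x:\mathbb R_+\to\mathcal S$ with $\dot x_{i,j}(t)=b_{i,j}(x(t))$ for a.e. $t$ and all $i\le j$. A fixed point is a fluid solution with $b(x(t))=0$ for all $t\ge0$ (hence constant, identified with a point of $\mathcal S$). *)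

theory Defs
  imports Complex_Main
begin

text \<open>States are functions x :: nat \<Rightarrow> nat \<Rightarrow> real, where x i j is the entry x_{i,j}
  for 0 \<le> i \<le> j \<le> I; entries outside this triangle are required to vanish,
  so that points of the state space S correspond bijectively to such functions.\<close>

definition simplexS :: "nat \<Rightarrow> (nat \<Rightarrow> nat \<Rightarrow> real) set" where
  "simplexS I = {x. (\<forall>i j. 0 \<le> x i j) \<and> (\<forall>i j. \<not> (i \<le> j \<and> j \<le> I) \<longrightarrow> x i j = 0)
                    \<and> (\<Sum>i=0..I. \<Sum>j=i..I. x i j) = 1}"

definition row :: "nat \<Rightarrow> (nat \<Rightarrow> nat \<Rightarrow> real) \<Rightarrow> nat \<Rightarrow> real" where
  "row I x i = (\<Sum>j=i..I. x i j)"

definition col :: "(nat \<Rightarrow> nat \<Rightarrow> real) \<Rightarrow> nat \<Rightarrow> real" where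
  "col x j = (\<Sum>i=0..j. x i j)"

definition Rfun :: "real \<Rightarrow> nat \<Rightarrow> nat \<Rightarrow> (nat \<Rightarrow> nat \<Rightarrow> real) \<Rightarrow> nat \<Rightarrow> real" where
  "Rfun lam d I x j =
     (if (\<Sum>i=0..j. col x i) = 0
      then max 0 (lam * (1 - real d * (\<Sum>i=0..j. (real (j+1) - real i) * row I x i)))
      else 0)"

definition Gfun :: "real \<Rightarrow> nat \<Rightarrow> nat \<Rightarrow> (nat \<Rightarrow> nat \<Rightarrow> real) \<Rightarrow> nat \<Rightarrow> real" where
  "Gfun lam d I x j =
     lam * real d *
     (if (\<Sum>i=0..j. col x i) = 0 \<and> real d * (\<Sum>i=0..j. (real (j+1) - real i) * row I x i) \<le> 1
      then (\<Sum>i=0..j. row I x i) else 0)"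

definition rho :: "real \<Rightarrow> nat \<Rightarrow> nat \<Rightarrow> (nat \<Rightarrow> nat \<Rightarrow> real) \<Rightarrow> nat \<Rightarrow> nat \<Rightarrow> nat \<Rightarrow> real" where
  "rho lam d I x k a b = (if col x b > 0 then Rfun lam d I x k * x a b / col x b else 0)"

definition drift :: "real \<Rightarrow> nat \<Rightarrow> nat \<Rightarrow> (nat \<Rightarrow> nat \<Rightarrow> real) \<Rightarrow> nat \<Rightarrow> nat \<Rightarrow> real" where
  "drift lam d I x i j =
    (if i = 0 \<and> j = 0 then
        lam * real d * (row I x 0 - x 0 0) - lam + Rfun lam d I x 0
     else if i < j then
        x (i+1) j - (if i > 0 then x i j else 0) - lam * real d * x i j
        - rho lam d I x (j-1) i j
        + (if i > 0 then rho lam d I x (j-2) (i-1) (j-1) else 0)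
        + (if j = I \<and> i > 0 then rho lam d I x (I-1) (i-1) I else 0)
     else if i = 1 \<and> j = 1 then
        - x 1 1 + lam * real d * (row I x 1 - x 1 1) + lam - Rfun lam d I x 0
        - rho lam d I x 0 1 1 - Gfun lam d I x 1
     else if i = j \<and> 2 \<le> i \<and> i \<le> I - 1 then
        - x i i + lam * real d * (row I x i - x i i) - rho lam d I x (i-1) i i
        + rho lam d I x (i-2) (i-1) (i-1) + Gfun lam d I x (i-1) - Gfun lam d I x i
     else if i = I \<and> j = I then
        - x I I + rho lam d I x (I-2) (I-1) (I-1) + Gfun lam d I x (I-1)
        + rho lam d I x (I-1) (I-1) I
     else 0)"

definition fixed_point :: "real \<Rightarrow> nat \<Rightarrow> nat \<Rightarrow> (nat \<Rightarrow> nat \<Rightarrow> real) \<Rightarrow> bool" where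
  "fixed_point lam d I x \<longleftrightarrow>
     x \<in> simplexS I \<and> (\<forall>i j. i \<le> j \<longrightarrow> j \<le> I \<longrightarrow> drift lam d I x i j = 0)"

end

theory Submission
  imports Defs
begin

text \<open>Let \<open>m\<close> be the first nonempty column of a fixed point. Every \<open>Rfun k\<close> and \<open>Gfun k\<close> with
  \<open>k \<ge> m\<close> vanishes, so nothing is routed beyond column \<open>m + 1\<close>, and the balance equations,
  read column by column, force all later columns to vanish. On columns \<open>m\<close> and \<open>m + 1\<close> they
  become linear recurrences along the column with growth factors \<open>1 + \<lambda>d + q\<close> and \<open>1 + \<lambda>d\<close>,
  where \<open>q\<close> is the relative rate at which column \<open>m\<close> is routed into column \<open>m + 1\<close>; the
  diagonal balance below column \<open>m\<close> fixes \<open>Rfun (m-1)\<close>. Solving the recurrences, the total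
  mass constraint gives \<open>x\<^sub>0\<^sub>,\<^sub>m + x\<^sub>0\<^sub>,\<^sub>m\<^sub>+\<^sub>1 = 1 - \<lambda>\<close> and the closed form of \<open>x\<^sub>0\<^sub>,\<^sub>m\<close>, whose
  positivity and the nonnegativity of \<open>x\<^sub>0\<^sub>,\<^sub>m\<^sub>+\<^sub>1\<close> are exactly
  \<open>(1 + \<lambda>d)\<^sup>m (1 - \<lambda>) \<le> 1 < (1 + \<lambda>d)\<^sup>m\<^sup>+\<^sup>1 (1 - \<lambda>)\<close>, i.e. \<open>m = j\<^sup>*\<close>
  (the case \<open>m = I\<close> is excluded by a growth estimate along the last column). The remaining
  diagonal equation determines \<open>q\<close> as the unique root of an increasing function. Conversely
  these formulas define a nonnegative state with vanishing drift.\<close>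

lemma simplexS_nonneg: "x \<in> simplexS I \<Longrightarrow> 0 \<le> x i j"
  by (simp add: simplexS_def)

lemma simplexS_eq_0: "x \<in> simplexS I \<Longrightarrow> \<not> (i \<le> j \<and> j \<le> I) \<Longrightarrow> x i j = 0"
  by (simp add: simplexS_def)

lemma col_nonneg: "x \<in> simplexS I \<Longrightarrow> 0 \<le> col x j"
  unfolding col_def by (rule sum_nonneg) (simp add: simplexS_nonneg)

lemma row_nonneg: "x \<in> simplexS I \<Longrightarrow> 0 \<le> row I x j"
  unfolding row_def by (rule sum_nonneg) (simp add: simplexS_nonneg)

lemma sum_triangle_eq_sum_col:
  assumes "\<And>i j. \<not> (i \<le> j \<and> j \<le> I) \<Longrightarrow> x i j = 0"
  shows "(\<Sum>i=0..I. \<Sum>j=i..I. x i j) = (\<Sum>j=0..I. col x j)"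
proof -
  have "(\<Sum>i=0..I. \<Sum>j=i..I. x i j) = (\<Sum>i=0..I. \<Sum>j=0..I. x i j)"
    by (intro sum.cong refl sum.mono_neutral_left) (auto simp: assms)
  also have "\<dots> = (\<Sum>j=0..I. \<Sum>i=0..I. x i j)"
    by (rule sum.swap)
  also have "\<dots> = (\<Sum>j=0..I. col x j)"
    unfolding col_def by (intro sum.cong refl sum.mono_neutral_right) (auto simp: assms)
  finally show ?thesis .
qed

lemma simplexS_iff_col:
  "x \<in> simplexS I \<longleftrightarrow> (\<forall>i j. 0 \<le> x i j) \<and> (\<forall>i j. \<not> (i \<le> j \<and> j \<le> I) \<longrightarrow> x i j = 0)
     \<and> (\<Sum>j=0..I. col x j) = 1"
  unfolding simplexS_def using sum_triangle_eq_sum_col[of I x] by auto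

lemma simplexS_sum_col: "x \<in> simplexS I \<Longrightarrow> (\<Sum>j=0..I. col x j) = 1"
  by (simp add: simplexS_iff_col)

lemma simplexS_sum_col_subset:
  assumes "x \<in> simplexS I" "J \<subseteq> {0..I}" "\<And>j. j \<notin> J \<Longrightarrow> col x j = 0"
  shows "(\<Sum>j\<in>J. col x j) = 1"
  using simplexS_sum_col[OF assms(1)] sum.mono_neutral_left[of "{0..I}" J "col x"] assms(2,3)
  by auto

lemma simplexS_col_eq_0_iff:
  assumes "x \<in> simplexS I" shows "col x j = 0 \<longleftrightarrow> (\<forall>i. x i j = 0)"
proof
  assume "col x j = 0"
  then have "\<forall>i\<in>{0..j}. x i j = 0"
    unfolding col_def by (subst (asm) sum_nonneg_eq_0_iff) (auto simp: simplexS_nonneg[OF assms])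
  then show "\<forall>i. x i j = 0"
    using simplexS_eq_0[OF assms] by (metis atLeastAtMost_iff le0)
qed (simp add: col_def)

definition col_cumsum :: "(nat \<Rightarrow> nat \<Rightarrow> real) \<Rightarrow> nat \<Rightarrow> real" where
  "col_cumsum x k = (\<Sum>i=0..k. col x i)"

definition row_cumsum :: "nat \<Rightarrow> (nat \<Rightarrow> nat \<Rightarrow> real) \<Rightarrow> nat \<Rightarrow> real" where
  "row_cumsum I x k = (\<Sum>i=0..k. row I x i)"

definition row_load :: "nat \<Rightarrow> (nat \<Rightarrow> nat \<Rightarrow> real) \<Rightarrow> nat \<Rightarrow> real" where
  "row_load I x k = (\<Sum>i=0..k. (real (k+1) - real i) * row I x i)"

lemma Rfun_eq:
  "Rfun lam d I x k = (if col_cumsum x k = 0 then max 0 (lam * (1 - real d * row_load I x k)) else 0)"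
  by (simp add: Rfun_def col_cumsum_def row_load_def)

lemma Gfun_eq:
  "Gfun lam d I x k =
     (if col_cumsum x k = 0 \<and> real d * row_load I x k \<le> 1 then lam * real d * row_cumsum I x k else 0)"
  by (simp add: Gfun_def col_cumsum_def row_load_def row_cumsum_def)

lemma col_le_col_cumsum: "x \<in> simplexS I \<Longrightarrow> m \<le> k \<Longrightarrow> col x m \<le> col_cumsum x k"
  unfolding col_cumsum_def by (intro member_le_sum) (auto simp: col_nonneg)

lemma rho_eq_0_beyond_col:
  "x \<in> simplexS I \<Longrightarrow> 0 < col x m \<Longrightarrow> m \<le> k \<Longrightarrow> rho lam d I x k a b = 0"
  and Gfun_eq_0_beyond_col:
  "x \<in> simplexS I \<Longrightarrow> 0 < col x m \<Longrightarrow> m \<le> k \<Longrightarrow> Gfun lam d I x k = 0"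
  using col_le_col_cumsum[of x I m k] by (simp_all add: rho_def Rfun_eq Gfun_eq)

lemma row_cumsum_0 [simp]: "row_cumsum I x 0 = row I x 0"
  by (simp add: row_cumsum_def)

lemma row_cumsum_Suc: "row_cumsum I x (Suc k) = row_cumsum I x k + row I x (Suc k)"
  by (simp add: row_cumsum_def)

lemma row_load_0 [simp]: "row_load I x 0 = row I x 0"
  by (simp add: row_load_def)

lemma row_load_eq_sum_row_cumsum: "row_load I x k = (\<Sum>j=0..k. row_cumsum I x j)"
proof (induction k)
  case 0
  then show ?case by simp
next
  case (Suc k)
  have "row_load I x (Suc k) = (\<Sum>i=0..Suc k. (real (k+1) - real i) * row I x i + row I x i)"
    unfolding row_load_def by (rule sum.cong) (auto simp: algebra_simps)
  also have "\<dots> = row_load I x k + row_cumsum I x (Suc k)"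
    by (simp add: sum.distrib row_cumsum_def row_load_def)
  finally show ?case using Suc by simp
qed

lemma row_cumsum_nonneg: "x \<in> simplexS I \<Longrightarrow> 0 \<le> row_cumsum I x j"
  unfolding row_cumsum_def by (intro sum_nonneg) (auto simp: row_nonneg)

lemma row_cumsum_mono: "x \<in> simplexS I \<Longrightarrow> j \<le> k \<Longrightarrow> row_cumsum I x j \<le> row_cumsum I x k"
  unfolding row_cumsum_def by (intro sum_mono2) (auto simp: row_nonneg)

lemma row_load_mono: "x \<in> simplexS I \<Longrightarrow> j \<le> k \<Longrightarrow> row_load I x j \<le> row_load I x k"
  unfolding row_load_eq_sum_row_cumsum by (intro sum_mono2) (auto simp: row_cumsum_nonneg)

lemma row_load_eq_0:
  assumes "x \<in> simplexS I" "row_cumsum I x k = 0" shows "row_load I x k = 0"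
proof -
  have "\<forall>j\<in>{0..k}. row_cumsum I x j = 0"
    using row_cumsum_mono[OF assms(1)] row_cumsum_nonneg[OF assms(1)] assms(2)
    by (metis atLeastAtMost_iff order_antisym)
  then show ?thesis unfolding row_load_eq_sum_row_cumsum by simp
qed

section \<open>States supported on two adjacent columns\<close>

definition two_columns :: "nat \<Rightarrow> (nat \<Rightarrow> nat \<Rightarrow> real) \<Rightarrow> bool" where
  "two_columns m x \<longleftrightarrow> (\<forall>i j. x i j \<noteq> 0 \<longrightarrow> j = m \<or> j = Suc m)"

lemma simplexS_if_two_columns:
  assumes "\<And>i j. 0 \<le> x i j" "two_columns J x" "\<And>i j. j < i \<Longrightarrow> x i j = 0" "Suc J \<le> I"
    and "col x J + col x (Suc J) = 1"
  shows "x \<in> simplexS I"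
proof -
  have outside: "x i j = 0" if "j \<noteq> J" "j \<noteq> Suc J" for i j
    using assms(2) that unfolding two_columns_def by blast
  have "(\<Sum>j=0..I. col x j) = (\<Sum>j\<in>{J, Suc J}. col x j)"
    using assms(4) by (intro sum.mono_neutral_right) (auto simp: col_def outside)
  also have "\<dots> = 1" using assms(5) by simp
  finally show ?thesis
    unfolding simplexS_iff_col using assms(1,3,4) outside by (metis Suc_leD le_trans not_le)
qed

lemma simplexS_two_columns_col_sum:
  assumes "x \<in> simplexS I" "two_columns J x" "Suc J \<le> I"
  shows "col x J + col x (Suc J) = 1"
proof -
  have "col x j = 0" if "j \<notin> {J, Suc J}" for j
    unfolding col_def by (intro sum.neutral) (use assms(2) that in \<open>auto simp: two_columns_def\<close>)
  then show ?thesis using simplexS_sum_col_subset[OF assms(1), of "{J, Suc J}"] assms(3) by auto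
qed

text \<open>In such a state every \<open>Rfun k\<close>, \<open>Gfun k\<close> with \<open>k \<ge> m\<close> vanishes, so only \<open>Rfun (m-1)\<close>
  feeds the routing terms.\<close>

locale two_column_state =
  fixes I m :: nat and x :: "nat \<Rightarrow> nat \<Rightarrow> real"
  assumes in_simplex: "x \<in> simplexS I" and two_cols: "two_columns m x"
    and col_m_pos: "0 < col x m" and m_le: "m \<le> I"
begin

lemma entry_eq_0: "j \<noteq> m \<Longrightarrow> j \<noteq> Suc m \<Longrightarrow> x i j = 0"
  using two_cols unfolding two_columns_def by blast

lemma entry_low_eq_0: "j < i \<Longrightarrow> x i j = 0"
  using simplexS_eq_0[OF in_simplex, of i j] by simp

lemma col_eq_0: "j \<noteq> m \<Longrightarrow> j \<noteq> Suc m \<Longrightarrow> col x j = 0"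
  unfolding col_def by (simp add: entry_eq_0)

lemma col_cumsum_eq_0_iff: "col_cumsum x k = 0 \<longleftrightarrow> k < m"
proof
  assume "col_cumsum x k = 0"
  then show "k < m"
    using col_le_col_cumsum[OF in_simplex, of m k] col_m_pos by (cases "k < m") auto
next
  assume "k < m"
  then show "col_cumsum x k = 0" unfolding col_cumsum_def by (simp add: col_eq_0)
qed

lemmas rho_late = rho_eq_0_beyond_col[OF in_simplex col_m_pos]
  and Gfun_late = Gfun_eq_0_beyond_col[OF in_simplex col_m_pos]

lemma row_eq: "row I x i = x i m + x i (Suc m)"
proof -
  have "row I x i = (\<Sum>j\<in>{m, Suc m} \<inter> {i..I}. x i j)"
    unfolding row_def by (intro sum.mono_neutral_right) (auto intro: entry_eq_0)
  also have "\<dots> = x i m + x i (Suc m)"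
    using simplexS_eq_0[OF in_simplex, of i m] simplexS_eq_0[OF in_simplex, of i "Suc m"] m_le
    by (cases "i \<le> m"; cases "i \<le> Suc m"; cases "Suc m \<le> I") (auto simp: Int_insert_left)
  finally show ?thesis .
qed

lemma Rfun_eq_if: "Rfun lam d I x k = (if k < m then max 0 (lam * (1 - real d * row_load I x k)) else 0)"
  by (simp add: Rfun_eq col_cumsum_eq_0_iff)

lemma Gfun_eq_if:
  "Gfun lam d I x k = (if k < m \<and> real d * row_load I x k \<le> 1 then lam * real d * row_cumsum I x k else 0)"
  by (simp add: Gfun_eq col_cumsum_eq_0_iff)

lemma rho_eq_if: "rho lam d I x k a b =
   (if b = m \<and> k < m then Rfun lam d I x k * x a m / col x m
    else if b = Suc m \<and> k < m \<and> col x (Suc m) > 0 then Rfun lam d I x k * x a (Suc m) / col x (Suc m)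
    else 0)"
  using col_m_pos col_eq_0[of b] by (cases "b = m"; cases "b = Suc m") (auto simp: rho_def Rfun_eq_if)

lemma drift_first_column:
  assumes "m = 0" "1 < I" "i \<le> j" "j \<le> I"
  shows "drift lam d I x i j =
    (if i = 0 \<and> j = 0 then lam * real d * x 0 1 - lam
     else if i = 0 \<and> j = 1 then x 1 1 - lam * real d * x 0 1
     else if i = 1 \<and> j = 1 then lam - x 1 1 else 0)"
proof -
  have rho: "rho lam d I x k a b = 0" and R: "Rfun lam d I x k = 0" and G: "Gfun lam d I x k = 0"
    for k a b using assms(1) by (simp_all add: rho_eq_if Rfun_eq_if Gfun_eq_if)
  have x_high: "x a b = 0" if "2 \<le> b" for a b using entry_eq_0[of b a] assms(1) that by auto
  have x_low: "x a b = 0" if "b < a" for a b using simplexS_eq_0[OF in_simplex, of a b] that by simp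
  have row: "row I x a = x a 0 + x a 1" for a using row_eq assms(1) by simp
  consider "i = 0" "j = 0" | "i = 0" "j = 1" | "i = 1" "j = 1" | "2 \<le> j"
    using assms(3) by linarith
  then show ?thesis
  proof cases
    case 4
    then show ?thesis
      using rho G row x_high[of j] x_high[of j "Suc i"] x_low[where a = j and b = 0]
        x_low[where a = j and b = 1]
      unfolding drift_def by auto
  qed (use R rho G row assms(2) x_high[of 1 1] x_low[where a = 1 and b = 0] in \<open>auto simp: drift_def algebra_simps\<close>)
qed

end

locale two_column_drift = two_column_state +
  fixes lam :: real and d :: nat
  assumes m_pos: "1 \<le> m" and lam_pos: "0 < lam" and d_pos: "1 \<le> d"
begin

text \<open>Every entry of column \<open>m\<close> is routed to column \<open>m + 1\<close> at the same relative rate \<open>q\<close>.\<close>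

definition q :: real where
  "q = Rfun lam d I x (m-1) / col x m"

lemma q_nonneg: "0 \<le> q"
  unfolding q_def using col_m_pos m_pos by (simp add: Rfun_eq_if)

lemma rho_col_m: "rho lam d I x (m - Suc 0) a m = q * x a m"
  using m_pos by (simp add: rho_eq_if q_def)

lemma rho_other_col: "b \<noteq> m \<Longrightarrow> b \<noteq> Suc m \<Longrightarrow> rho lam d I x k a b = 0"
  by (simp add: rho_eq_if)

lemma drift_0_0: "drift lam d I x 0 0 = lam * real d * row I x 0 - lam + Rfun lam d I x 0"
  using entry_eq_0[of 0 0] m_pos unfolding drift_def by simp

lemma drift_1_1:
  assumes "1 < m"
  shows "drift lam d I x 1 1 = lam * real d * row I x 1 + lam - Rfun lam d I x 0 - Gfun lam d I x 1"
  using entry_eq_0[of 1 1] rho_other_col[of 1 0 1] assms unfolding drift_def by simp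

lemma drift_diag_below:
  assumes "2 \<le> k" "k < m"
  shows "drift lam d I x k k = lam * real d * row I x k + Gfun lam d I x (k-1) - Gfun lam d I x k"
proof -
  have "k \<le> I - 1" using assms m_le by simp
  moreover have "rho lam d I x (k-2) (k-1) (k-1) = 0" using assms by (simp add: rho_other_col)
  ultimately show ?thesis
    using entry_eq_0[of k k] rho_other_col[of k "k-1" k] assms unfolding drift_def by simp
qed

text \<open>The balance equations on the diagonal below column \<open>m\<close> select the nonzero branches of
  \<open>Rfun (m-1)\<close> and of the \<open>Gfun k\<close>, \<open>k < m\<close>.\<close>

lemma Rfun_0_if_drift_0_0:
  assumes "drift lam d I x 0 0 = 0"
  shows "real d * row I x 0 \<le> 1" and "Rfun lam d I x 0 = lam - lam * real d * row I x 0"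
proof -
  have R0: "Rfun lam d I x 0 = max 0 (lam * (1 - real d * row I x 0))"
    using m_pos by (simp add: Rfun_eq_if)
  have balance: "lam * real d * row I x 0 - lam + Rfun lam d I x 0 = 0"
    using assms drift_0_0 by simp
  show le: "real d * row I x 0 \<le> 1"
  proof (rule ccontr)
    assume "\<not> ?thesis"
    then have "Rfun lam d I x 0 = 0" using R0 lam_pos by (simp add: mult_pos_neg)
    then have "real d * row I x 0 = 1" using balance lam_pos by (simp add: algebra_simps)
    with \<open>\<not> ?thesis\<close> show False by simp
  qed
  then show "Rfun lam d I x 0 = lam - lam * real d * row I x 0"
    using R0 lam_pos by (simp add: algebra_simps)
qed

lemma Gfun_if_diag_drift_0:
  assumes "\<forall>k<m. drift lam d I x k k = 0" "1 \<le> k" "k < m"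
  shows "Gfun lam d I x k = lam * real d * row_cumsum I x k"
  using assms(2,3)
proof (induction k)
  case (Suc k)
  show ?case
  proof (cases "k = 0")
    case True
    then show ?thesis
      using assms(1) Suc.prems drift_1_1 Rfun_0_if_drift_0_0(2)
      by (simp add: row_cumsum_Suc algebra_simps)
  next
    case False
    then show ?thesis
      using assms(1) Suc drift_diag_below[of "Suc k"] by (simp add: row_cumsum_Suc algebra_simps)
  qed
qed simp

lemma Rfun_if_diag_drift_0:
  assumes "\<forall>k<m. drift lam d I x k k = 0"
  shows "real d * row_load I x (m-1) \<le> 1"
    and "Rfun lam d I x (m-1) = lam - lam * real d * row_load I x (m-1)"
proof -
  show le: "real d * row_load I x (m-1) \<le> 1"
  proof (cases "m = 1")
    case True
    then show ?thesis using assms Rfun_0_if_drift_0_0(1) by simp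
  next
    case False
    show ?thesis
    proof (rule ccontr)
      assume "\<not> ?thesis"
      then have "Gfun lam d I x (m-1) = 0" using m_pos by (simp add: Gfun_eq_if)
      then have "row_cumsum I x (m-1) = 0"
        using Gfun_if_diag_drift_0[OF assms, of "m-1"] False m_pos lam_pos d_pos by simp
      then have "row_load I x (m-1) = 0" by (rule row_load_eq_0[OF in_simplex])
      with \<open>\<not> ?thesis\<close> show False by simp
    qed
  qed
  then show "Rfun lam d I x (m-1) = lam - lam * real d * row_load I x (m-1)"
    using m_pos lam_pos by (simp add: Rfun_eq_if algebra_simps)
qed

lemma drift_col_last:
  assumes "m = I" "i < I"
  shows "drift lam d I x i I = x (i+1) I - (if 0 < i then x i I else 0) - lam * real d * x i I
     - q * x i I + (if 0 < i then q * x (i-1) I else 0)"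
  using assms rho_col_m rho_other_col[of "I - Suc 0" "I - 2"] m_pos unfolding drift_def by auto

context
  assumes m_less: "Suc m \<le> I"
begin

lemma drift_col_m:
  assumes "i < m"
  shows "drift lam d I x i m = x (i+1) m - (if 0 < i then x i m else 0) - lam * real d * x i m - q * x i m"
  using assms m_pos m_less rho_col_m rho_other_col[of "m-1" "m-2"] unfolding drift_def by auto

lemma drift_col_Suc_m:
  assumes "i < Suc m"
  shows "drift lam d I x i (Suc m) = x (i+1) (Suc m) - (if 0 < i then x i (Suc m) else 0)
     - lam * real d * x i (Suc m) + (if 0 < i then q * x (i-1) m else 0)"
proof -
  have "rho lam d I x (m - 1) (i-1) m = q * x (i-1) m"
    using rho_col_m by simp
  moreover have "Suc m = I \<Longrightarrow> rho lam d I x (I-1) (i-1) I = 0"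
    by (simp add: rho_late)
  ultimately show ?thesis
    using assms m_pos rho_late[of m] unfolding drift_def by auto
qed

lemma drift_diag_m:
  "drift lam d I x m m = - x m m + lam * real d * x m (Suc m) - q * x m m
     + (if m = 1 then lam - Rfun lam d I x 0 else Gfun lam d I x (m-1))"
proof -
  have "m = 1 \<or> (2 \<le> m \<and> m \<le> I - 1)" using m_pos m_less by auto
  then show ?thesis
    using rho_col_m[of m] Gfun_late[of m] row_eq[of m] rho_other_col[of "m-1" "m-2" "m-1"]
    unfolding drift_def by auto
qed

lemma drift_diag_Suc_m: "drift lam d I x (Suc m) (Suc m) = - x (Suc m) (Suc m) + q * x m m"
proof -
  have row: "row I x (Suc m) = x (Suc m) (Suc m)"
    using row_eq entry_low_eq_0[of m "Suc m"] by simp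
  show ?thesis
  proof (cases "Suc m = I")
    case True
    then have "I - 2 = m - 1" "I - 1 = m" by auto
    then show ?thesis
      using True m_pos rho_col_m[of m] rho_late[of m] Gfun_late[of m] unfolding drift_def by auto
  next
    case False
    then have "2 \<le> Suc m" "Suc m \<le> I - 1" using m_pos m_less by auto
    then show ?thesis
      using False rho_col_m[of m] rho_late[of m] rho_late[of "Suc m"] Gfun_late[of m]
        Gfun_late[of "Suc m"] row unfolding drift_def by simp
  qed
qed

lemma drift_off_support:
  assumes "i < j" "j \<noteq> m" "j \<noteq> Suc m" "j \<le> I"
  shows "drift lam d I x i j = 0"
proof -
  have "rho lam d I x (j-2) (i-1) (j-1) = 0"
    using assms by (cases "j - 1 = Suc m") (auto intro: rho_late rho_other_col)
  then show ?thesis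
    using assms entry_eq_0 rho_other_col[of j] unfolding drift_def by auto
qed

lemma drift_diag_above:
  assumes "Suc m < j" "j \<le> I"
  shows "drift lam d I x j j = 0"
proof (cases "j = I")
  case True
  then show ?thesis
    using assms m_pos entry_eq_0[of I I] rho_late[of "I-2"] rho_late[of "I-1"] Gfun_late[of "I-1"]
    unfolding drift_def by auto
next
  case False
  have "row I x j = 0" using row_eq entry_low_eq_0 assms by simp
  moreover have "2 \<le> j" "j \<le> I - 1" using False assms by auto
  ultimately show ?thesis
    using assms entry_eq_0[of j j] rho_late[of "j-1"] rho_late[of "j-2"] Gfun_late[of "j-1"]
      Gfun_late[of j] unfolding drift_def by simp
qed

end

end

text \<open>Closed forms of the two nonempty columns of a fixed point: with \<open>\<alpha> = 1 + \<lambda>d + q\<close> and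
  \<open>\<beta> = 1 + \<lambda>d\<close>, column \<open>m\<close> is \<open>colA\<close> and column \<open>m + 1\<close> is \<open>colB\<close>; \<open>cumA\<close>, \<open>cumB\<close> are their
  partial sums.\<close>

locale column_profile =
  fixes be al a0 b0 :: real
begin

definition colA :: "nat \<Rightarrow> real" where
  "colA i = (if i = 0 then a0 else (al - 1) * al^(i-1) * a0)"

definition cumA :: "nat \<Rightarrow> real" where
  "cumA k = al^k * a0"

definition cumB :: "nat \<Rightarrow> real" where
  "cumB k = be^k * b0 + a0 * (be^(k-1) - al^(k-1))"

definition colB :: "nat \<Rightarrow> real" where
  "colB i = (if i = 0 then b0 else cumB i - cumB (i-1))"

lemma colA_0 [simp]: "colA 0 = a0"
  by (simp add: colA_def)

lemma colA_Suc: "colA (Suc n) = (al - 1) * al^n * a0"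
  by (simp add: colA_def)

lemma colA_Suc_Suc: "colA (Suc (Suc n)) = al * colA (Suc n)"
  by (simp add: colA_def)

lemma colB_0 [simp]: "colB 0 = b0"
  by (simp add: colB_def)

lemma colB_1: "colB (Suc 0) = (be - 1) * b0"
  by (simp add: colB_def cumB_def algebra_simps)

lemma colB_Suc: "colB (Suc n) = cumB (Suc n) - cumB n"
  by (simp add: colB_def)

lemma colB_Suc_Suc: "colB (Suc (Suc n)) = be * colB (Suc n) - (al - be) * colA n"
  by (cases n) (simp_all add: colB_def cumB_def colA_def algebra_simps)

lemma colA_recurrence: "colA (Suc i) = (if 0 < i then colA i else 0) + (al - 1) * colA i"
  by (cases i) (simp_all add: colA_Suc colA_Suc_Suc algebra_simps)

lemma colB_recurrence:
  "colB (Suc i) = (if 0 < i then colB i - (al - be) * colA (i-1) else 0) + (be - 1) * colB i"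
  by (cases i) (simp_all add: colB_1 colB_Suc_Suc algebra_simps)

lemma colB_Suc_Suc_eq:
  "colB (Suc (Suc k)) = (be - 1) * be^(Suc k) * b0 + a0 * ((be - 1) * be^k - (al - 1) * al^k)"
  by (simp add: colB_def cumB_def algebra_simps)

lemma sum_colA: "(\<Sum>i=0..k. colA i) = cumA k"
  by (induction k) (simp_all add: colA_def cumA_def algebra_simps)

lemma sum_colB: "(\<Sum>i=0..k. colB i) = cumB k"
  by (induction k) (simp_all add: colB_def cumB_def)

lemma cumA_Suc: "cumA (Suc k) = cumA k + colA (Suc k)"
  by (simp add: cumA_def colA_def algebra_simps)

lemma cumA_add_cumB_Suc: "cumA n + cumB (Suc n) = be^(Suc n) * b0 + be^n * a0"
  by (simp add: cumA_def cumB_def algebra_simps)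

text \<open>The identity behind \<open>row_load\<close> of a state with columns \<open>colA\<close>, \<open>colB\<close>.\<close>

lemma sum_cumA_cumB:
  "(be - 1) * (\<Sum>k=0..n. cumA k + cumB k) = cumA (n+1) + cumB (n+1) - (a0 + b0) - (al - be) * cumA n"
proof (induction n)
  case 0
  then show ?case by (simp add: cumA_def cumB_def algebra_simps)
next
  case (Suc n)
  then show ?case by (cases n) (simp_all add: cumA_def cumB_def algebra_simps)
qed

lemma colA_nonneg: "1 \<le> al \<Longrightarrow> 0 \<le> a0 \<Longrightarrow> 0 \<le> colA i"
  by (simp add: colA_def)

text \<open>Nonnegativity of the bottom entry of \<open>colB\<close> propagates upwards.\<close>

lemma colB_Suc_Suc_compare:
  assumes "k \<le> n" "1 \<le> be" "be \<le> al" "0 \<le> a0"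
  shows "be^k * colB (Suc (Suc n)) \<le> be^n * colB (Suc (Suc k))"
proof -
  obtain p where n: "n = k + p" using assms(1) le_Suc_ex by blast
  have "be^p \<le> al^p" using assms by (intro power_mono) auto
  moreover have "be^n * colB (Suc (Suc k)) - be^k * colB (Suc (Suc n))
      = a0 * (al - 1) * (be^k * al^k) * (al^p - be^p)"
    unfolding colB_Suc_Suc_eq n by (simp add: algebra_simps power_add)
  ultimately show ?thesis using assms by (smt (verit) mult_nonneg_nonneg zero_le_power)
qed

end

definition profile_a0 :: "real \<Rightarrow> nat \<Rightarrow> nat \<Rightarrow> real" where
  "profile_a0 lam d J = ((1 + lam * real d) * (1 - lam) - 1 / (1 + lam * real d)^J) / (lam * real d)"

definition profile_state :: "real \<Rightarrow> nat \<Rightarrow> nat \<Rightarrow> real \<Rightarrow> nat \<Rightarrow> nat \<Rightarrow> real" where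
  "profile_state lam d J q i j =
     (if j = J \<and> i \<le> J then column_profile.colA (1 + lam * real d + q) (profile_a0 lam d J) i
      else if j = Suc J \<and> i \<le> Suc J then
        column_profile.colB (1 + lam * real d) (1 + lam * real d + q) (profile_a0 lam d J)
          (1 - lam - profile_a0 lam d J) i
      else 0)"

text \<open>The balance equation at the diagonal entry \<open>(J+1, J+1)\<close> of a profile state reads
  \<open>rate_fun lam d J q = \<lambda>d\<close>; it pins down the routing rate \<open>q\<close>.\<close>

definition rate_fun :: "real \<Rightarrow> nat \<Rightarrow> nat \<Rightarrow> real \<Rightarrow> real" where
  "rate_fun lam d J q =
     (lam * real d + q) * (1 + lam * real d + q)^(J - 1) * profile_a0 lam d J * (1 + lam * real d) * (1 + q)"

lemma profile_state_eq_0: "j \<noteq> J \<Longrightarrow> j \<noteq> Suc J \<Longrightarrow> profile_state lam d J q i j = 0"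
  and profile_state_below_diag: "j < i \<Longrightarrow> profile_state lam d J q i j = 0"
  and profile_state_0_J: "profile_state lam d J q 0 J = profile_a0 lam d J"
  and profile_state_0_Suc_J: "profile_state lam d J q 0 (Suc J) = 1 - lam - profile_a0 lam d J"
  by (auto simp: profile_state_def column_profile.colA_def column_profile.colB_def)

lemma profile_state_two_columns: "two_columns J (profile_state lam d J q)"
  unfolding two_columns_def using profile_state_eq_0 by blast

lemma lam_d_mult_profile_a0:
  "0 < lam * real d \<Longrightarrow>
    lam * real d * profile_a0 lam d J = (1 + lam * real d) * (1 - lam) - 1 / (1 + lam * real d)^J"
  by (auto simp: profile_a0_def)

lemma profile_state_first_cols_indep: "profile_state lam d 0 q = profile_state lam d 0 0"
  by (simp add: fun_eq_iff profile_state_def column_profile.colA_def column_profile.colB_def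
      column_profile.cumB_def)

lemma profile_state_1_1:
  "profile_state lam d 0 q 1 1 = lam * real d * (1 - lam - profile_a0 lam d 0)"
  by (simp add: profile_state_def column_profile.colB_Suc column_profile.cumB_def algebra_simps)

section \<open>Fixed points are profile states\<close>

locale fixed_point_state =
  fixes lam :: real and d I :: nat and y :: "nat \<Rightarrow> nat \<Rightarrow> real"
  assumes lam_pos: "0 < lam" and lam_less: "lam < 1" and d_ge: "2 \<le> d" and I_gt: "1 < I"
    and fixed: "fixed_point lam d I y"
begin

lemma in_simplex: "y \<in> simplexS I"
  using fixed by (simp add: fixed_point_def)

lemma drift_eq_0: "i \<le> j \<Longrightarrow> j \<le> I \<Longrightarrow> drift lam d I y i j = 0"
  using fixed by (simp add: fixed_point_def)

lemma lam_d_pos: "0 < lam * real d"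
  using lam_pos d_ge by simp

definition m :: nat where
  "m = (LEAST j. 0 < col y j)"

lemma ex_col_pos: "\<exists>j\<le>I. 0 < col y j"
proof (rule ccontr)
  assume "\<not> ?thesis"
  then have "\<forall>j\<in>{0..I}. col y j = 0"
    using col_nonneg[OF in_simplex] by (meson atLeastAtMost_iff antisym not_le)
  with simplexS_sum_col[OF in_simplex] show False by simp
qed

lemma col_m_pos: "0 < col y m"
  unfolding m_def using ex_col_pos by (meson LeastI_ex)

lemma m_le: "m \<le> I"
  unfolding m_def using ex_col_pos by (meson Least_le order.trans)

lemma entry_before_m: "j < m \<Longrightarrow> y i j = 0"
  unfolding m_def using not_less_Least col_nonneg[OF in_simplex] simplexS_col_eq_0_iff[OF in_simplex]
  by (metis le_less)

text \<open>Beyond column \<open>m + 1\<close> nothing is routed in, so the balance equations of such a column,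
  read from the diagonal upwards, force it to vanish once all later columns vanish.\<close>

lemma diag_eq_0_beyond:
  assumes n: "Suc m < n" "n \<le> I" and later: "\<And>k i. n < k \<Longrightarrow> y i k = 0"
  shows "y n n = 0"
proof -
  note rho_beyond = rho_eq_0_beyond_col[OF in_simplex col_m_pos]
  note Gfun_beyond = Gfun_eq_0_beyond_col[OF in_simplex col_m_pos]
  show ?thesis
  proof (cases "n = I")
    case True
    then have "I \<noteq> 1" "\<not> I \<le> I - 1" "m \<le> I - 2" "m \<le> I - 1" using n I_gt by auto
    then show ?thesis
      using True drift_eq_0[of I I] rho_beyond[of "I-2"] rho_beyond[of "I-1"] Gfun_beyond[of "I-1"]
      unfolding drift_def by simp
  next
    case False
    have "row I y n = (\<Sum>j\<in>{n}. y n j)"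
      unfolding row_def using later n by (intro sum.mono_neutral_right) auto
    moreover have "2 \<le> n" "n \<le> I - 1" using n False by auto
    ultimately show ?thesis
      using n drift_eq_0[of n n] rho_beyond[of "n-1"] rho_beyond[of "n-2"] Gfun_beyond[of "n-1"]
        Gfun_beyond[of n] unfolding drift_def by simp
  qed
qed

lemma col_eq_0_beyond:
  assumes n: "Suc m < n" "n \<le> I" and later: "\<And>k i. n < k \<Longrightarrow> y i k = 0"
  shows "y i n = 0"
proof (cases "i \<le> n")
  case True
  then show ?thesis
  proof (induction rule: inc_induct)
    case base
    then show ?case using diag_eq_0_beyond[OF n later] .
  next
    case (step k)
    have "drift lam d I y k n = y (k+1) n - (if 0 < k then y k n else 0) - lam * real d * y k n"
      using step n by (simp add: drift_def rho_eq_0_beyond_col[OF in_simplex col_m_pos])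
    then have "((if 0 < k then 1 else 0) + lam * real d) * y k n = 0"
      using drift_eq_0[of k n] step n by (simp add: algebra_simps)
    then show ?case using lam_d_pos by (smt (verit) mult_eq_0_iff)
  qed
next
  case False
  then show ?thesis using simplexS_eq_0[OF in_simplex, of i n] by simp
qed

lemma entry_beyond_Suc_m: "Suc m < n \<Longrightarrow> y i n = 0"
proof (induction "Suc I - n" arbitrary: n i rule: less_induct)
  case less
  show ?case
  proof (cases "n \<le> I")
    case True
    have "y i' k = 0" if "n < k" for k i'
      using less.hyps[of k i'] less.prems that simplexS_eq_0[OF in_simplex, of i' k]
      by (cases "k \<le> I") auto
    then show ?thesis using col_eq_0_beyond[OF less.prems True] by blast
  next
    case False
    then show ?thesis using simplexS_eq_0[OF in_simplex] by simp
  qed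
qed

lemma two_columns_m: "two_columns m y"
  unfolding two_columns_def
  using entry_before_m entry_beyond_Suc_m by (metis linorder_neqE_nat not_less_eq)

sublocale two_column_state I m y
  using in_simplex two_columns_m col_m_pos m_le by unfold_locales

lemma sum_two_cols: "Suc m \<le> I \<Longrightarrow> col y m + col y (Suc m) = 1"
  using simplexS_two_columns_col_sum[OF in_simplex two_columns_m] .

lemma fixed_point_m_eq_0:
  assumes m: "m = 0"
  shows "1 < (1 + lam * real d) * (1 - lam)" and "y = profile_state lam d 0 0"
proof -
  define D where "D = lam * real d"
  have D: "0 < D" unfolding D_def by (rule lam_d_pos)
  have drift00: "drift lam d I y 0 0 = 0" and drift01: "drift lam d I y 0 1 = 0"
    using I_gt by (simp_all add: drift_eq_0)
  have "D * y 0 1 = lam"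
    using drift_first_column[OF m I_gt, of 0 0 lam d] drift00 unfolding D_def by simp
  then have y01: "y 0 1 = lam / D" using D by (simp add: field_simps)
  have "y 1 1 = D * y 0 1"
    using drift_first_column[OF m I_gt, of 0 1 lam d] drift01 I_gt unfolding D_def by simp
  then have y11: "y 1 1 = lam" using y01 D by simp
  have a0: "profile_a0 lam d 0 = 1 - lam - lam / D"
    unfolding profile_a0_def D_def[symmetric] using D by (simp add: field_simps)
  have y00: "y 0 0 = profile_a0 lam d 0"
    using sum_two_cols I_gt m y01 y11 a0 by (simp add: col_def)
  have "0 < D * y 0 0" using col_m_pos m D by (simp add: col_def)
  moreover have "D * y 0 0 = D * (1 - lam) - lam" using y00 a0 D by (simp add: field_simps)
  ultimately show "1 < (1 + lam * real d) * (1 - lam)"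
    unfolding D_def[symmetric] by (simp add: algebra_simps)
  show "y = profile_state lam d 0 0"
  proof (intro ext)
    fix i j :: nat
    consider "j = 0" "i = 0" | "j = 1" "i = 0" | "j = 1" "i = 1" | "j < i" | "j \<noteq> 0" "j \<noteq> 1"
      by linarith
    then show "y i j = profile_state lam d 0 0 i j"
    proof cases
      case 3
      then show ?thesis using y11 a0 lam_d_pos profile_state_1_1[of lam d] by (auto simp: D_def)
    next
      case 4
      then show ?thesis using entry_low_eq_0 profile_state_below_diag by simp
    next
      case 5
      then show ?thesis using entry_eq_0 m profile_state_eq_0 by simp
    qed (use y00 y01 a0 profile_state_0_J profile_state_0_Suc_J in auto)
  qed
qed

end

locale interior_fixed_point = fixed_point_state +
  assumes m_ge_1: "1 \<le> m" and Suc_m_le: "Suc m \<le> I"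
begin

sublocale two_column_drift I m y lam d
  using m_ge_1 lam_pos d_ge by unfold_locales auto

definition be :: real where "be = 1 + lam * real d"
definition al :: real where "al = 1 + lam * real d + q"
definition a0 :: real where "a0 = y 0 m"
definition b0 :: real where "b0 = y 0 (Suc m)"

sublocale P: column_profile be al a0 b0 .

lemma be_al:
  "be - 1 = lam * real d" "al - be = q" "al - 1 = lam * real d + q" "1 < be" "be \<le> al"
  using lam_d_pos q_nonneg by (auto simp: be_def al_def)

lemma col_m_eq_colA: "i \<le> m \<Longrightarrow> y i m = P.colA i"
proof (induction i)
  case 0
  then show ?case by (simp add: column_profile.colA_def a0_def)
next
  case (Suc i)
  then have "y (Suc i) m = (if 0 < i then y i m else 0) + (al - 1) * y i m"
    using drift_eq_0[of i m] drift_col_m[OF Suc_m_le, of i] m_le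
    unfolding be_al(3) by (simp add: algebra_simps)
  then show ?case using Suc by (simp add: P.colA_recurrence)
qed

lemma col_Suc_m_eq_colB: "i \<le> Suc m \<Longrightarrow> y i (Suc m) = P.colB i"
proof (induction i rule: less_induct)
  case (less i)
  show ?case
  proof (cases i)
    case 0
    then show ?thesis by (simp add: column_profile.colB_def b0_def)
  next
    case (Suc k)
    then have "y i (Suc m) = (if 0 < k then y k (Suc m) - (al - be) * y (k-1) m else 0)
        + (be - 1) * y k (Suc m)"
      using drift_eq_0[of k "Suc m"] drift_col_Suc_m[OF Suc_m_le, of k] less.prems Suc_m_le
      unfolding be_al(1,2) by auto
    then show ?thesis
      using less Suc col_m_eq_colA[of "k-1"] by (simp add: P.colB_recurrence)
  qed
qed

lemma col_m_eq: "col y m = P.cumA m"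
  unfolding col_def P.sum_colA[symmetric] using col_m_eq_colA by simp

lemma col_Suc_m_eq: "col y (Suc m) = P.cumB (Suc m)"
  unfolding col_def P.sum_colB[symmetric] using col_Suc_m_eq_colB by simp

lemma colB_Suc_m: "P.colB (Suc m) = q * P.colA m"
  using drift_eq_0[of "Suc m" "Suc m"] drift_diag_Suc_m[OF Suc_m_le] col_m_eq_colA[of m]
    col_Suc_m_eq_colB[of "Suc m"] Suc_m_le by simp

lemma row_cumsum_eq: "k \<le> m \<Longrightarrow> row_cumsum I y k = P.cumA k + P.cumB k"
  unfolding row_cumsum_def row_eq P.sum_colA[symmetric] P.sum_colB[symmetric] sum.distrib[symmetric]
  using col_m_eq_colA col_Suc_m_eq_colB by (intro sum.cong) auto

lemma row_load_eq: "lam * real d * row_load I y (m-1)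
    = P.cumA m + P.cumB m - (a0 + b0) - q * P.cumA (m-1)"
  using P.sum_cumA_cumB[of "m-1"] be_al m_ge_1 row_cumsum_eq
  unfolding row_load_eq_sum_row_cumsum by simp

lemma cumA_add_cumB_eq_1: "P.cumA m + P.cumB (Suc m) = 1"
  using sum_two_cols Suc_m_le col_m_eq col_Suc_m_eq by simp

lemma Rfun_eq_q_cumA: "Rfun lam d I y (m-1) = q * P.cumA m"
  using col_m_pos col_m_eq by (simp add: q_def)

text \<open>Compare \<open>Rfun (m-1)\<close> as routed into column \<open>m + 1\<close> with its value from the diagonal
  balance below column \<open>m\<close>.\<close>

lemma a0_add_b0: "a0 + b0 = 1 - lam"
proof -
  have "q * P.cumA m = lam - lam * real d * row_load I y (m-1)"
    using Rfun_if_diag_drift_0(2) drift_eq_0 m_le Rfun_eq_q_cumA by simp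
  moreover have "P.cumB m = P.cumB (Suc m) - P.colB (Suc m)"
    by (simp add: P.colB_Suc)
  moreover have "P.cumA m = P.cumA (m-1) + P.colA m"
    using P.cumA_Suc[of "m-1"] m_ge_1 by simp
  ultimately show ?thesis
    using row_load_eq cumA_add_cumB_eq_1 colB_Suc_m by (simp add: algebra_simps)
qed

lemma be_power_mass: "be^(Suc m) * b0 + be^m * a0 = 1"
  using P.cumA_add_cumB_Suc[of m] cumA_add_cumB_eq_1 by simp

lemma a0_identity: "lam * real d * be^m * a0 = be^(Suc m) * (1 - lam) - 1"
proof -
  have "be^(Suc m) * (1 - lam) - 1 = be^(Suc m) * (a0 + b0) - (be^(Suc m) * b0 + be^m * a0)"
    using a0_add_b0 be_power_mass by simp
  also have "\<dots> = (be - 1) * be^m * a0"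
    by (simp add: algebra_simps)
  finally show ?thesis using be_al(1) by simp
qed

lemma a0_eq_profile_a0: "a0 = profile_a0 lam d m"
proof -
  have pos: "0 < be^m" using be_al by simp
  have "lam * real d * a0 = (lam * real d * be^m * a0) / be^m"
    using pos by (metis mult.commute mult.left_commute less_irrefl nonzero_mult_div_cancel_left)
  also have "\<dots> = lam * real d * profile_a0 lam d m"
    unfolding a0_identity lam_d_mult_profile_a0[OF lam_d_pos] be_def[symmetric] using pos
    by (simp add: diff_divide_distrib)
  finally show ?thesis using lam_d_pos by auto
qed

lemma a0_pos: "0 < a0"
proof -
  have "0 < al^m * a0" using col_m_pos col_m_eq by (simp add: P.cumA_def)
  moreover have "0 < al" using be_al by simp
  ultimately show ?thesis by (simp add: zero_less_mult_iff)
qed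

lemma threshold_ineqs: "be^m * (1 - lam) \<le> 1" "1 < be^(Suc m) * (1 - lam)"
proof -
  have "be^m * b0 \<le> be^(Suc m) * b0"
    using simplexS_nonneg[OF in_simplex, of 0 "Suc m"] be_al unfolding b0_def
    by (intro mult_right_mono) auto
  then have "be^m * (a0 + b0) \<le> be^(Suc m) * b0 + be^m * a0"
    by (simp add: algebra_simps)
  then show "be^m * (1 - lam) \<le> 1"
    using be_power_mass a0_add_b0 by simp
  have "0 < lam * real d * be^m * a0"
    using a0_pos lam_d_pos be_al by simp
  then show "1 < be^(Suc m) * (1 - lam)"
    using a0_identity by simp
qed

lemma rate_fun_q: "rate_fun lam d m q = lam * real d"
proof -
  obtain n where m: "m = Suc n" using m_ge_1 by (cases m) auto
  have "be * P.colB (Suc (Suc n)) = (be - 1) * (be^(Suc (Suc n)) * b0 + be^(Suc n) * a0)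
      - a0 * be * al^n * (al - 1)"
    by (simp add: P.colB_Suc_Suc_eq algebra_simps)
  then have "be * (q * ((al - 1) * al^n * a0)) = (be - 1) - a0 * be * al^n * (al - 1)"
    using colB_Suc_m be_power_mass m by (simp add: P.colA_Suc)
  then have "(al - 1) * al^n * a0 * be * (1 + q) = be - 1"
    by (simp add: algebra_simps)
  then show ?thesis
    using m a0_eq_profile_a0 unfolding rate_fun_def al_def be_def by (simp add: algebra_simps)
qed

lemma eq_profile_state: "y = profile_state lam d m q"
proof (intro ext)
  fix i j :: nat
  consider "j = m" | "j = Suc m" | "j \<noteq> m" "j \<noteq> Suc m" by blast
  then show "y i j = profile_state lam d m q i j"
  proof cases
    case 1
    then show ?thesis
      using col_m_eq_colA[of i] entry_low_eq_0[of j i] a0_eq_profile_a0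
      unfolding profile_state_def al_def by auto
  next
    case 2
    have "b0 = 1 - lam - profile_a0 lam d m"
      using a0_add_b0 a0_eq_profile_a0 by simp
    then show ?thesis
      using 2 col_Suc_m_eq_colB[of i] entry_low_eq_0[of j i] a0_eq_profile_a0
      unfolding profile_state_def al_def be_def by auto
  qed (simp add: entry_eq_0 profile_state_eq_0)
qed

end

locale last_column_fixed_point = fixed_point_state +
  assumes m_eq_I: "m = I"
begin

sublocale two_column_drift I m y lam d
  using m_eq_I I_gt lam_pos d_ge by unfold_locales auto

abbreviation T :: "nat \<Rightarrow> real" where
  "T \<equiv> row_cumsum I y"

lemma row_eq_last: "row I y i = y i I"
  using row_eq m_eq_I simplexS_eq_0[OF in_simplex, of i "Suc I"] by simp

lemma T_Suc: "T (Suc k) = T k + y (Suc k) I"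
  by (simp add: row_cumsum_Suc row_eq_last)

lemma T_I: "T I = 1"
proof -
  have "T I = col y I"
    unfolding row_cumsum_def col_def row_eq_last ..
  also have "\<dots> = 1"
  proof -
    have "col y j = 0" if "j \<noteq> I" for j
      using col_eq_0[of j] m_eq_I that simplexS_eq_0[OF in_simplex]
      by (cases "j = Suc I") (auto simp: col_def)
    then show ?thesis using simplexS_sum_col_subset[OF in_simplex, of "{I}"] by auto
  qed
  finally show ?thesis .
qed

lemma Rfun_eq_q: "Rfun lam d I y (I-1) = q"
  using T_I col_m_pos m_eq_I unfolding q_def row_cumsum_def col_def row_eq_last by simp

lemma entry_Suc_last: "Suc k \<le> I \<Longrightarrow> y (Suc k) I = lam * real d * T k + q * y k I"
proof (induction k)
  case 0
  then show ?case
    using drift_eq_0[of 0 I] drift_col_last[OF m_eq_I, of 0] I_gt by (simp add: row_eq_last)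
next
  case (Suc k)
  then have "y (Suc (Suc k)) I = y (Suc k) I + lam * real d * y (Suc k) I + q * y (Suc k) I - q * y k I"
    using drift_eq_0[of "Suc k" I] drift_col_last[OF m_eq_I, of "Suc k"] by simp
  then show ?case using Suc T_Suc[of k] by (simp add: algebra_simps)
qed

lemma T_growth: "k \<le> I \<Longrightarrow> (1 + lam * real d)^k * T 0 \<le> T k"
proof (induction k)
  case (Suc k)
  have "0 \<le> q * y k I" using q_nonneg simplexS_nonneg[OF in_simplex] by simp
  then have "(1 + lam * real d) * T k \<le> T (Suc k)"
    using T_Suc[of k] entry_Suc_last[of k] Suc.prems by (simp add: algebra_simps)
  moreover have "(1 + lam * real d) * ((1 + lam * real d)^k * T 0) \<le> (1 + lam * real d) * T k"
    using Suc lam_d_pos by simp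
  ultimately show ?case by simp
qed simp

lemma row_load_last: "Suc k \<le> I \<Longrightarrow> lam * real d * row_load I y k = T (Suc k) - T 0 - q * T k"
proof (induction k)
  case 0
  then show ?case using T_Suc[of 0] entry_Suc_last[of 0] by (simp add: row_eq_last algebra_simps)
next
  case (Suc k)
  have "row_load I y (Suc k) = row_load I y k + T (Suc k)"
    unfolding row_load_eq_sum_row_cumsum by simp
  then show ?case
    using Suc T_Suc[of k] T_Suc[of "Suc k"] entry_Suc_last[of "Suc k"] by (simp add: algebra_simps)
qed

text \<open>When all mass sits in the last column, the mass \<open>T 0\<close> of its top entry is at least
  \<open>1 - \<lambda>\<close>, and it is amplified by at least \<open>1 + \<lambda>d\<close> per row.\<close>

lemma last_column_threshold: "(1 + lam * real d)^I * (1 - lam) \<le> 1"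
proof -
  have "q = lam - lam * real d * row_load I y (I-1)"
    using Rfun_if_diag_drift_0(2) drift_eq_0 m_eq_I Rfun_eq_q by simp
  then have "T 0 = 1 - lam + q * (1 - T (I-1))"
    using row_load_last[of "I-1"] I_gt T_I by (simp add: algebra_simps)
  moreover have "T (I-1) \<le> 1"
    using row_cumsum_mono[OF in_simplex, of "I-1" I] T_I by simp
  ultimately have "1 - lam \<le> T 0"
    using q_nonneg by (smt (verit) mult_nonneg_nonneg)
  then have "(1 + lam * real d)^I * (1 - lam) \<le> (1 + lam * real d)^I * T 0"
    using lam_d_pos by (intro mult_left_mono) auto
  also have "\<dots> \<le> 1" using T_growth[of I] T_I by simp
  finally show ?thesis .
qed

end

section \<open>Profile states are fixed points\<close>

locale profile_candidate =
  fixes lam :: real and d I J :: nat and q :: real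
  assumes lam_pos: "0 < lam" and d_ge: "2 \<le> d" and J_ge_1: "1 \<le> J" and Suc_J_le: "Suc J \<le> I"
    and below_threshold: "(1 + lam * real d)^J * (1 - lam) \<le> 1"
    and above_threshold: "1 < (1 + lam * real d)^(Suc J) * (1 - lam)"
    and q_nonneg: "0 \<le> q" and rate: "rate_fun lam d J q = lam * real d"
begin

definition be :: real where "be = 1 + lam * real d"
definition al :: real where "al = 1 + lam * real d + q"
definition a0 :: real where "a0 = profile_a0 lam d J"
definition b0 :: real where "b0 = 1 - lam - a0"

sublocale P: column_profile be al a0 b0 .

abbreviation x :: "nat \<Rightarrow> nat \<Rightarrow> real" where
  "x \<equiv> profile_state lam d J q"

lemma lam_d_pos: "0 < lam * real d"
  using lam_pos d_ge by simp

lemma be_al: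
  "be - 1 = lam * real d" "al - be = q" "al - 1 = lam * real d + q" "1 < be" "be \<le> al"
  using lam_d_pos q_nonneg by (auto simp: be_def al_def)

lemma x_eq: "x i j = (if j = J \<and> i \<le> J then P.colA i else if j = Suc J \<and> i \<le> Suc J then P.colB i else 0)"
  unfolding profile_state_def al_def be_def a0_def b0_def by simp

lemma a0_identity: "lam * real d * be^J * a0 = be^(Suc J) * (1 - lam) - 1"
proof -
  have pos: "0 < be^J" using be_al by simp
  have "lam * real d * a0 = be * (1 - lam) - 1 / be^J"
    unfolding a0_def be_def using lam_d_mult_profile_a0[OF lam_d_pos] by simp
  then have "lam * real d * a0 * be^J = (be * (1 - lam) - 1 / be^J) * be^J" by simp
  also have "\<dots> = be * (1 - lam) * be^J - 1" using pos be_al(4) by (simp add: left_diff_distrib)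
  finally show ?thesis by (simp add: algebra_simps)
qed

lemma a0_pos: "0 < a0"
proof -
  have "0 < lam * real d * be^J * a0"
    using a0_identity above_threshold unfolding be_def by simp
  moreover have "0 < lam * real d * be^J" using lam_d_pos be_al by simp
  ultimately show ?thesis by (simp add: zero_less_mult_iff)
qed

lemma b0_nonneg: "0 \<le> b0"
proof -
  have "be^(Suc J) * (1 - lam) - 1 \<le> be^(Suc J) * (1 - lam) - be^J * (1 - lam)"
    using below_threshold unfolding be_def by simp
  also have "\<dots> = lam * real d * be^J * (1 - lam)"
    using be_al by (simp add: algebra_simps)
  finally have "lam * real d * be^J * a0 \<le> lam * real d * be^J * (1 - lam)"
    using a0_identity by simp
  moreover have "0 < lam * real d * be^J" using lam_d_pos be_al by simp
  ultimately have "a0 \<le> 1 - lam" by (metis mult_le_cancel_left_pos)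
  then show ?thesis unfolding b0_def by simp
qed

lemma be_power_mass: "be^(Suc J) * b0 + be^J * a0 = 1"
proof -
  have "be^(Suc J) * b0 + be^J * a0 = be^(Suc J) * (1 - lam) - (be - 1) * be^J * a0"
    unfolding b0_def by (simp add: algebra_simps)
  then show ?thesis using a0_identity be_al by simp
qed

lemma cumA_add_cumB_eq_1: "P.cumA J + P.cumB (Suc J) = 1"
  using P.cumA_add_cumB_Suc[of J] be_power_mass by simp

lemma rate_identity: "(al - 1) * al^(J-1) * a0 * be * (1 + q) = be - 1"
  using rate be_al unfolding rate_fun_def al_def a0_def be_def by (simp add: algebra_simps)

lemma colA_J_Suc: "Suc n = J \<Longrightarrow> P.colA J = (al - 1) * al^n * a0"
  using P.colA_Suc[of n] by simp

lemma rate_identity_Suc: "Suc n = J \<Longrightarrow> be - 1 = (al - 1) * al^n * a0 * be * (1 + q)"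
  using rate_identity by auto

lemma colB_Suc_J: "P.colB (Suc J) = q * P.colA J"
proof -
  obtain n where J: "Suc n = J" using J_ge_1 by (cases J) auto
  have "be * P.colB (Suc (Suc n))
      = (be - 1) * (be^(Suc (Suc n)) * b0 + be^(Suc n) * a0) - a0 * be * al^n * (al - 1)"
    by (simp add: P.colB_Suc_Suc_eq algebra_simps)
  then have "be * P.colB (Suc J) = (be - 1) * (be^(Suc J) * b0 + be^J * a0) - a0 * be * al^n * (al - 1)"
    unfolding J .
  also have "\<dots> = (be - 1) - a0 * be * al^n * (al - 1)"
    using be_power_mass by simp
  also have "\<dots> = be * (q * P.colA J)"
    unfolding rate_identity_Suc[OF J] colA_J_Suc[OF J] by (simp add: algebra_simps)
  finally show ?thesis using be_al by simp
qed

lemma diag_balance: "(1 + q) * P.colA J = lam * real d * (P.cumA (J-1) + P.cumB J)"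
proof -
  obtain n where J: "Suc n = J" using J_ge_1 by (cases J) auto
  have "be * (P.cumA n + P.cumB (Suc n)) = be^(Suc (Suc n)) * b0 + be^(Suc n) * a0"
    by (simp add: P.cumA_add_cumB_Suc algebra_simps)
  then have "be * (P.cumA n + P.cumB J) = 1"
    using be_power_mass unfolding J by simp
  have "be * ((1 + q) * P.colA J) = be - 1"
    unfolding colA_J_Suc[OF J] rate_identity_Suc[OF J] by (simp add: algebra_simps)
  also have "\<dots> = (be - 1) * (be * (P.cumA n + P.cumB J))"
    using \<open>be * (P.cumA n + P.cumB J) = 1\<close> by simp
  finally have "be * ((1 + q) * P.colA J) = be * ((be - 1) * (P.cumA n + P.cumB J))"
    by (simp add: algebra_simps)
  then show ?thesis using be_al J by auto
qed

lemma colB_nonneg: "i \<le> Suc J \<Longrightarrow> 0 \<le> P.colB i"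
proof -
  assume i: "i \<le> Suc J"
  obtain n where J: "J = Suc n" using J_ge_1 by (cases J) auto
  have top: "0 \<le> P.colB (Suc (Suc n))"
    using colB_Suc_J J q_nonneg P.colA_nonneg a0_pos be_al by simp
  consider "i = 0" | "i = 1" | k where "i = Suc (Suc k)" "k \<le> n"
    using i J by (metis One_nat_def Suc_le_mono not0_implies_Suc)
  then show ?thesis
  proof cases
    case 3
    have "be^k * P.colB (Suc (Suc n)) \<le> be^n * P.colB (Suc (Suc k))"
      using P.colB_Suc_Suc_compare[OF \<open>k \<le> n\<close>] be_al a0_pos by simp
    moreover have "0 \<le> be^k * P.colB (Suc (Suc n))" using top be_al by simp
    moreover have "0 < be^n" using be_al by simp
    ultimately show ?thesis using 3 by (smt (verit) zero_le_mult_iff)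
  qed (use b0_nonneg be_al P.colB_1 in auto)
qed

lemma col_J_eq: "col x J = P.cumA J"
  unfolding col_def P.sum_colA[symmetric] by (simp add: x_eq)

lemma col_Suc_J_eq: "col x (Suc J) = P.cumB (Suc J)"
  unfolding col_def P.sum_colB[symmetric] by (simp add: x_eq)

lemma col_J_pos: "0 < col x J"
  using col_J_eq a0_pos be_al by (simp add: P.cumA_def)

lemma x_in_simplex: "x \<in> simplexS I"
proof (rule simplexS_if_two_columns)
  show "0 \<le> x i j" for i j
    using colB_nonneg P.colA_nonneg[of i] a0_pos be_al by (simp add: x_eq)
  show "two_columns J x" "\<And>i j. j < i \<Longrightarrow> x i j = 0"
    unfolding two_columns_def by (simp_all add: x_eq)
qed (use Suc_J_le col_J_eq col_Suc_J_eq cumA_add_cumB_eq_1 in auto)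

sublocale S: two_column_drift I J x lam d
proof unfold_locales
  show "two_columns J x" unfolding two_columns_def by (simp add: x_eq)
qed (use x_in_simplex col_J_pos Suc_J_le J_ge_1 lam_pos d_ge in auto)

lemma row_cumsum_eq: "k \<le> J \<Longrightarrow> row_cumsum I x k = P.cumA k + P.cumB k"
  unfolding row_cumsum_def S.row_eq P.sum_colA[symmetric] P.sum_colB[symmetric] sum.distrib[symmetric]
  by (intro sum.cong) (auto simp: x_eq)

lemma row_load_balance: "lam - lam * real d * row_load I x (J-1) = q * P.cumA J"
proof -
  have "lam * real d * row_load I x (J-1) = P.cumA J + P.cumB J - (a0 + b0) - q * P.cumA (J-1)"
    using P.sum_cumA_cumB[of "J-1"] be_al J_ge_1 row_cumsum_eq
    unfolding row_load_eq_sum_row_cumsum by simp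
  moreover have "P.cumB J = P.cumB (Suc J) - P.colB (Suc J)"
    by (simp add: P.colB_Suc)
  moreover have "P.cumA J = P.cumA (J-1) + P.colA J"
    using P.cumA_Suc[of "J-1"] J_ge_1 by simp
  ultimately show ?thesis
    using cumA_add_cumB_eq_1 colB_Suc_J unfolding b0_def by (simp add: algebra_simps)
qed

lemma row_load_le: "k < J \<Longrightarrow> real d * row_load I x k \<le> 1"
proof -
  assume "k < J"
  have "0 \<le> q * P.cumA J" using q_nonneg col_J_eq col_J_pos by simp
  then have "lam * (real d * row_load I x (J-1)) \<le> lam * 1"
    using row_load_balance by (simp add: algebra_simps)
  then have "real d * row_load I x (J-1) \<le> 1" using lam_pos by simp
  moreover have "row_load I x k \<le> row_load I x (J-1)"
    using row_load_mono[OF x_in_simplex] \<open>k < J\<close> by simp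
  ultimately show ?thesis by (smt (verit) mult_left_mono of_nat_0_le_iff)
qed

lemma S_q_eq: "S.q = q"
proof -
  have "Rfun lam d I x (J-1) = lam - lam * real d * row_load I x (J-1)"
    using row_load_le[of "J-1"] J_ge_1 lam_pos by (simp add: S.Rfun_eq_if algebra_simps)
  then show ?thesis
    unfolding S.q_def using row_load_balance col_J_eq col_J_pos by simp
qed

lemma Rfun_0: "Rfun lam d I x 0 = lam - lam * real d * row I x 0"
  using row_load_le[of 0] J_ge_1 lam_pos by (simp add: S.Rfun_eq_if algebra_simps)

lemma Gfun_below: "k < J \<Longrightarrow> Gfun lam d I x k = lam * real d * row_cumsum I x k"
  using row_load_le[of k] by (simp add: S.Gfun_eq_if)

lemma drift_diag_below_J: "j < J \<Longrightarrow> drift lam d I x j j = 0"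
proof -
  assume j: "j < J"
  consider "j = 0" | "j = 1" | "2 \<le> j" by linarith
  then show ?thesis
  proof cases
    case 1
    then show ?thesis using S.drift_0_0 Rfun_0 by simp
  next
    case 2
    then show ?thesis
      using S.drift_1_1 j Rfun_0 Gfun_below[of 1] row_cumsum_Suc[of I x 0] by (simp add: algebra_simps)
  next
    case 3
    then have "row_cumsum I x j = row_cumsum I x (j-1) + row I x j"
      using row_cumsum_Suc[of I x "j-1"] by simp
    then show ?thesis
      using S.drift_diag_below[OF 3 j] Gfun_below[of j] Gfun_below[of "j-1"] j by (simp add: algebra_simps)
  qed
qed

lemma drift_col_J: "i \<le> J \<Longrightarrow> drift lam d I x i J = 0"
proof -
  assume i: "i \<le> J"
  show ?thesis
  proof (cases "i < J")
    case True
    then have "drift lam d I x i J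
        = P.colA (Suc i) - (if 0 < i then P.colA i else 0) - lam * real d * P.colA i - q * P.colA i"
      using S.drift_col_m[OF Suc_J_le True] S_q_eq by (simp add: x_eq)
    also have "\<dots> = P.colA (Suc i) - ((if 0 < i then P.colA i else 0) + (al - 1) * P.colA i)"
      unfolding be_al(3) by (simp add: algebra_simps)
    finally show ?thesis by (simp add: P.colA_recurrence)
  next
    case False
    then have iJ: "i = J" using i by simp
    have "drift lam d I x J J = - P.colA J + lam * real d * P.colB J - q * P.colA J
        + (if J = 1 then lam - Rfun lam d I x 0 else Gfun lam d I x (J-1))"
      using S.drift_diag_m[OF Suc_J_le] S_q_eq by (simp add: x_eq)
    also have "(if J = 1 then lam - Rfun lam d I x 0 else Gfun lam d I x (J-1))
        = lam * real d * (P.cumA (J-1) + P.cumB (J-1))"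
      using Rfun_0 Gfun_below[of "J-1"] row_cumsum_eq[of "J-1"] J_ge_1 S.row_eq
      by (auto simp: x_eq P.cumA_def P.cumB_def)
    also have "- P.colA J + lam * real d * P.colB J - q * P.colA J
        + lam * real d * (P.cumA (J-1) + P.cumB (J-1)) = 0"
    proof -
      have "P.cumB J = P.cumB (J-1) + P.colB J"
        using P.colB_Suc[of "J-1"] J_ge_1 by simp
      then show ?thesis using diag_balance by (simp add: algebra_simps)
    qed
    finally show ?thesis using iJ by simp
  qed
qed

lemma drift_col_Suc_J: "i \<le> Suc J \<Longrightarrow> drift lam d I x i (Suc J) = 0"
proof -
  assume i: "i \<le> Suc J"
  show ?thesis
  proof (cases "i < Suc J")
    case True
    then have "drift lam d I x i (Suc J) = P.colB (Suc i)
        - ((if 0 < i then P.colB i - (al - be) * P.colA (i-1) else 0) + (be - 1) * P.colB i)"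
      using S.drift_col_Suc_m[OF Suc_J_le True] S_q_eq be_al(1,2) True
        by (simp add: x_eq le_diff_conv)
    then show ?thesis by (simp add: P.colB_recurrence)
  next
    case False
    then show ?thesis
      using i S.drift_diag_Suc_m[OF Suc_J_le] S_q_eq colB_Suc_J by (simp add: x_eq)
  qed
qed

lemma is_fixed_point: "fixed_point lam d I x"
  unfolding fixed_point_def
proof (intro conjI allI impI x_in_simplex)
  fix i j assume ij: "i \<le> j" "j \<le> I"
  consider "j < J" | "j = J" | "j = Suc J" | "Suc J < j" by linarith
  then show "drift lam d I x i j = 0"
  proof cases
    case 1
    then show ?thesis
      using ij S.drift_off_support[OF Suc_J_le] drift_diag_below_J by (cases "i < j") auto
  next
    case 4
    then show ?thesis
      using ij S.drift_off_support[OF Suc_J_le] S.drift_diag_above[OF Suc_J_le] by (cases "i < j") auto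
  qed (use ij drift_col_J drift_col_Suc_J in auto)
qed

end

lemma profile_a0_pos:
  assumes "0 < lam * real d" "1 < (1 + lam * real d)^(Suc J) * (1 - lam)"
  shows "0 < profile_a0 lam d J"
proof -
  have pos: "0 < (1 + lam * real d)^J" using assms(1) by simp
  have "1 < (1 + lam * real d) * (1 - lam) * (1 + lam * real d)^J"
    using assms(2) by (simp add: algebra_simps)
  then have "1 / (1 + lam * real d)^J < (1 + lam * real d) * (1 - lam)"
    using pos by (simp add: divide_less_eq)
  then show ?thesis unfolding profile_a0_def using assms(1) by simp
qed

lemma profile_state_first_cols_fixed_point:
  assumes lam: "0 < lam" and d: "2 \<le> d" and I: "1 < I"
    and above: "1 < (1 + lam * real d) * (1 - lam)"
  shows "fixed_point lam d I (profile_state lam d 0 0)"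
proof -
  define x where "x = profile_state lam d 0 0"
  define a0 where "a0 = profile_a0 lam d 0"
  have D: "0 < lam * real d" using lam d by simp
  have a0: "0 < a0" unfolding a0_def using profile_a0_pos[OF D] above by simp
  have "lam * real d * a0 = (1 + lam * real d) * (1 - lam) - 1"
    unfolding a0_def using lam_d_mult_profile_a0[OF D] by simp
  then have b0: "lam * real d * (1 - lam - a0) = lam"
    by (simp add: algebra_simps)
  then have b0_nonneg: "0 \<le> 1 - lam - a0"
    using D lam by (smt (verit) mult_nonneg_nonneg zero_le_mult_iff)
  have x: "x i j = (if j = 0 \<and> i = 0 then a0 else if j = 1 \<and> i = 0 then 1 - lam - a0
      else if j = 1 \<and> i = 1 then lam else 0)" for i j
  proof -
    consider "j = 0" "i = 0" | "j = 1" "i = 0" | "j = 1" "i = 1" | "j < i" | "j \<noteq> 0" "j \<noteq> 1"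
      by linarith
    then show ?thesis
      unfolding x_def a0_def
      by cases (use b0 profile_state_eq_0 profile_state_below_diag profile_state_0_J
          profile_state_0_Suc_J profile_state_1_1 in \<open>auto simp: a0_def\<close>)
  qed
  have two: "two_columns 0 x" unfolding two_columns_def by (simp add: x)
  have simplex: "x \<in> simplexS I"
    using I lam a0 b0_nonneg two by (intro simplexS_if_two_columns) (auto simp: x col_def)
  interpret two_column_state I 0 x
    using simplex two a0 by unfold_locales (simp_all add: x col_def)
  have "drift lam d I x i j = 0" if "i \<le> j" "j \<le> I" for i j
    using drift_first_column[OF refl I that] b0 by (simp add: x)
  then show ?thesis using simplex unfolding fixed_point_def x_def by blast
qed

section \<open>The routing rate and the threshold index\<close>

lemma rate_fun_strict_mono:
  assumes "0 < lam * real d" "0 < profile_a0 lam d J" "0 \<le> a" "a < b"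
  shows "rate_fun lam d J a < rate_fun lam d J b"
proof -
  define D where "D = lam * real d"
  define c where "c = profile_a0 lam d J * (1 + D)"
  have c: "0 < c" unfolding c_def D_def using assms(1,2) by simp
  have D: "0 < D" unfolding D_def using assms(1) .
  have "(D + a) * (1 + D + a)^(J - 1) < (D + b) * (1 + D + b)^(J - 1)"
    using assms(3,4) D by (intro mult_less_le_imp_less power_mono) auto
  then have "(D + a) * (1 + D + a)^(J - 1) * c < (D + b) * (1 + D + b)^(J - 1) * c"
    using c by simp
  moreover have "0 \<le> (D + a) * (1 + D + a)^(J - 1) * c" using assms(3) D c by simp
  ultimately have "(D + a) * (1 + D + a)^(J - 1) * c * (1 + a) < (D + b) * (1 + D + b)^(J - 1) * c * (1 + b)"
    using assms(3,4) by (intro mult_less_le_imp_less[where a = "(D + a) * (1 + D + a)^(J - 1) * c"]) auto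
  then show ?thesis unfolding rate_fun_def c_def D_def by (simp add: algebra_simps)
qed

lemma rate_fun_0_le:
  assumes "0 < lam * real d" "1 \<le> J" "(1 + lam * real d)^J * (1 - lam) \<le> 1"
  shows "rate_fun lam d J 0 \<le> lam * real d"
proof -
  define be where "be = 1 + lam * real d"
  have be: "1 < be" unfolding be_def using assms(1) by simp
  have J: "be^J = be^(J-1) * be" using assms(2) by (simp add: power_eq_if)
  have "lam * real d * profile_a0 lam d J = be * (1 - lam) - 1 / be^J"
    unfolding be_def using lam_d_mult_profile_a0[OF assms(1)] by simp
  then have "lam * real d * profile_a0 lam d J * be^J = be * (be^J * (1 - lam)) - 1"
    using be by (simp add: left_diff_distrib)
  also have "\<dots> \<le> be - 1"
  proof -
    have "be * (be^J * (1 - lam)) \<le> be * 1"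
      using assms(3) be unfolding be_def[symmetric] by (intro mult_left_mono) auto
    then show ?thesis by simp
  qed
  finally have "lam * real d * profile_a0 lam d J * be^J \<le> lam * real d"
    unfolding be_def by simp
  moreover have "rate_fun lam d J 0 = lam * real d * profile_a0 lam d J * be^J"
    unfolding rate_fun_def be_def[symmetric] J by (simp add: algebra_simps)
  ultimately show ?thesis by simp
qed

lemma rate_fun_ge:
  assumes "0 < lam * real d" "0 < profile_a0 lam d J"
  defines "Q \<equiv> lam * real d / (profile_a0 lam d J * (1 + lam * real d))"
  shows "lam * real d \<le> rate_fun lam d J Q"
proof -
  define D where "D = lam * real d"
  define c where "c = profile_a0 lam d J * (1 + D)"
  have D: "0 < D" and c: "0 < c" unfolding D_def c_def using assms(1,2) by simp_all
  have Q: "0 \<le> Q" "Q * c = D" unfolding Q_def D_def[symmetric] c_def[symmetric] using D c by simp_all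
  have P: "1 \<le> (1 + D + Q)^(J-1)" using D Q by (intro one_le_power) simp
  have "Q \<le> (D + Q) * 1 * 1" using D by simp
  also have "\<dots> \<le> (D + Q) * (1 + D + Q)^(J-1) * (1 + Q)"
    using D Q P by (intro mult_mono) auto
  finally have "Q \<le> (D + Q) * (1 + D + Q)^(J-1) * (1 + Q)" .
  then have "Q * c \<le> (D + Q) * (1 + D + Q)^(J-1) * (1 + Q) * c"
    using c by simp
  then show ?thesis
    using Q unfolding rate_fun_def D_def[symmetric] c_def by (simp add: algebra_simps)
qed

lemma rate_fun_solution_exists:
  assumes "0 < lam * real d" "1 \<le> J" "(1 + lam * real d)^J * (1 - lam) \<le> 1"
    and "1 < (1 + lam * real d)^(Suc J) * (1 - lam)"
  shows "\<exists>q\<ge>0. rate_fun lam d J q = lam * real d"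
proof -
  have a0: "0 < profile_a0 lam d J" using profile_a0_pos assms(1,4) .
  define Q where "Q = lam * real d / (profile_a0 lam d J * (1 + lam * real d))"
  have "0 \<le> Q" unfolding Q_def using assms(1) a0 by simp
  moreover have "continuous_on {0..Q} (rate_fun lam d J)"
    unfolding rate_fun_def by (intro continuous_intros)
  ultimately show ?thesis
    using IVT'[of "rate_fun lam d J" 0 "lam * real d" Q] rate_fun_0_le[OF assms(1-3)]
      rate_fun_ge[OF assms(1) a0] unfolding Q_def by fastforce
qed

lemma rate_fun_solution_unique:
  assumes "0 < lam * real d" "0 < profile_a0 lam d J" "0 \<le> q1" "0 \<le> q2"
    and "rate_fun lam d J q1 = rate_fun lam d J q2"
  shows "q1 = q2"
  using rate_fun_strict_mono[OF assms(1,2)] assms(3-5) by (metis less_irrefl linorder_neqE)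

lemma floor_log_threshold:
  fixes lam be :: real
  assumes "0 < lam" "lam < 1" "1 < be"
  defines "J \<equiv> nat \<lfloor>- ln (1 - lam) / ln be\<rfloor>"
  shows "be^J * (1 - lam) \<le> 1" and "1 < be^(Suc J) * (1 - lam)"
proof -
  define L where "L = - ln (1 - lam) / ln be"
  have ln_be: "0 < ln be" using assms(3) by simp
  have "0 \<le> L" unfolding L_def using ln_be assms(1,2) by (intro divide_nonneg_pos) auto
  then have J: "real J \<le> L" "L < real J + 1"
    unfolding J_def L_def[symmetric] by linarith+
  have L: "L * ln be = - ln (1 - lam)" unfolding L_def using ln_be by simp
  have power_eq: "be^k * (1 - lam) = exp (real k * ln be + ln (1 - lam))" for k
    using assms by (simp add: exp_add exp_of_nat_mult)
  have "real J * ln be \<le> L * ln be" using J(1) ln_be by (intro mult_right_mono) auto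
  then show "be^J * (1 - lam) \<le> 1" unfolding power_eq using L by simp
  have "L * ln be < (real J + 1) * ln be" using J(2) ln_be by (intro mult_strict_right_mono) auto
  then show "1 < be^(Suc J) * (1 - lam)" unfolding power_eq using L by (simp add: algebra_simps)
qed

lemma threshold_index_unique:
  fixes lam be :: real
  assumes "lam < 1" "1 \<le> be"
    and "be^J * (1 - lam) \<le> 1" "1 < be^(Suc J) * (1 - lam)"
    and "be^m * (1 - lam) \<le> 1" "1 < be^(Suc m) * (1 - lam)"
  shows "m = J"
proof -
  have mono: "be^k * (1 - lam) \<le> be^k' * (1 - lam)" if "k \<le> k'" for k k'
    using that assms(1,2) by (intro mult_right_mono power_increasing) auto
  show ?thesis
    using mono[of "Suc m" J] mono[of "Suc J" m] assms(3-6) by (cases "m < J"; cases "J < m") auto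
qed

context fixed_point_state
begin

lemma first_col_eq_threshold_index:
  assumes "J < I" "(1 + lam * real d)^J * (1 - lam) \<le> 1" "1 < (1 + lam * real d)^(Suc J) * (1 - lam)"
  shows "m = J"
proof -
  have be: "1 \<le> 1 + lam * real d" using lam_d_pos by simp
  note unique = threshold_index_unique[OF lam_less be assms(2,3)]
  consider "m = 0" | "1 \<le> m" "Suc m \<le> I" | "m = I" using m_le by linarith
  then show ?thesis
  proof cases
    case 1
    then show ?thesis using unique[of 0] fixed_point_m_eq_0(1) lam_pos by simp
  next
    case 2
    interpret interior_fixed_point lam d I y
      using 2 by unfold_locales
    show ?thesis using unique threshold_ineqs unfolding be_def .
  next
    case 3
    interpret last_column_fixed_point lam d I y
      using 3 by unfold_locales
    have "(1 + lam * real d)^(Suc J) * (1 - lam) \<le> (1 + lam * real d)^I * (1 - lam)"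
      using assms(1) be lam_less by (intro mult_right_mono power_increasing) auto
    then show ?thesis using last_column_threshold assms(3) by simp
  qed
qed

lemma eq_profile_state_at_threshold:
  assumes "J < I" "(1 + lam * real d)^J * (1 - lam) \<le> 1" "1 < (1 + lam * real d)^(Suc J) * (1 - lam)"
  shows "\<exists>q\<ge>0. y = profile_state lam d J q \<and> (1 \<le> J \<longrightarrow> rate_fun lam d J q = lam * real d)"
proof -
  have m: "m = J" using first_col_eq_threshold_index[OF assms] .
  show ?thesis
  proof (cases "J = 0")
    case True
    then show ?thesis using fixed_point_m_eq_0(2) m by auto
  next
    case False
    interpret interior_fixed_point lam d I y
      using False m assms(1) by unfold_locales auto
    show ?thesis using q_nonneg eq_profile_state rate_fun_q m by auto
  qed
qed

end

lemma unique_fixed_point: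
  assumes lam: "0 < lam" "lam < 1" and d: "2 \<le> d" and I: "1 < I" and J: "J < I"
    and below: "(1 + lam * real d)^J * (1 - lam) \<le> 1"
    and above: "1 < (1 + lam * real d)^(Suc J) * (1 - lam)"
  shows "\<exists>q. \<forall>y. fixed_point lam d I y \<longleftrightarrow> y = profile_state lam d J q"
proof -
  have D: "0 < lam * real d" using lam d by simp
  have profile: "\<exists>q\<ge>0. y = profile_state lam d J q \<and> (1 \<le> J \<longrightarrow> rate_fun lam d J q = lam * real d)"
    if "fixed_point lam d I y" for y
  proof -
    interpret fixed_point_state lam d I y using lam d I that by unfold_locales
    show ?thesis using eq_profile_state_at_threshold[OF J below above] .
  qed
  show ?thesis
  proof (cases "J = 0")
    case True
    then have "fixed_point lam d I (profile_state lam d J 0)"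
      using profile_state_first_cols_fixed_point[OF lam(1) d I] above by simp
    then show ?thesis
      using profile True profile_state_first_cols_indep by metis
  next
    case False
    then have J1: "1 \<le> J" by simp
    obtain q where q: "0 \<le> q" "rate_fun lam d J q = lam * real d"
      using rate_fun_solution_exists[OF D J1 below above] by blast
    interpret profile_candidate lam d I J q
      using lam d J1 J below above q by unfold_locales auto
    have "y = profile_state lam d J q" if "fixed_point lam d I y" for y
      using profile[OF that] q J1 rate_fun_solution_unique[OF D profile_a0_pos[OF D above]]
      by metis
    then show ?thesis using is_fixed_point by metis
  qed
qed

theorem theorem2:
  fixes lam :: real and d I js :: nat
  assumes "0 < lam" "lam < 1" "2 \<le> d" "1 < I"
    and "js = nat \<lfloor>- ln (1 - lam) / ln (lam * real d + 1)\<rfloor>"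
    and "js < I"
  shows "\<exists>x. fixed_point lam d I x
            \<and> (\<forall>y. fixed_point lam d I y \<longrightarrow> y = x)
            \<and> col x js + col x (js+1) = 1
            \<and> (\<forall>i j. j \<noteq> js \<and> j \<noteq> js + 1 \<longrightarrow> x i j = 0)
            \<and> lam * real d * x 0 js = (1 + lam * real d) * (1 - lam) - 1 / (1 + lam * real d) ^ js
            \<and> x 0 js + x 0 (js+1) = 1 - lam"
proof -
  have D: "0 < lam * real d" using assms(1,3) by simp
  have "1 < lam * real d + 1" using D by simp
  from floor_log_threshold[OF assms(1,2) this, folded assms(5)]
  have "(1 + lam * real d)^js * (1 - lam) \<le> 1" "1 < (1 + lam * real d)^(Suc js) * (1 - lam)"
    by (simp_all add: add.commute)
  then obtain q where fp: "\<And>y. fixed_point lam d I y \<longleftrightarrow> y = profile_state lam d js q"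
    using unique_fixed_point[OF assms(1-4,6)] by blast
  let ?x = "profile_state lam d js q"
  have "?x \<in> simplexS I" using fp[of ?x] by (simp add: fixed_point_def)
  then have "col ?x js + col ?x (js+1) = 1"
    using simplexS_two_columns_col_sum profile_state_two_columns assms(6) by simp
  then show ?thesis
    using fp profile_state_eq_0 profile_state_0_J profile_state_0_Suc_J lam_d_mult_profile_a0[OF D]
    by (intro exI[of _ ?x]) auto
qed

end
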